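(* Let $\lambda,\mu\in\mathbb C$ with $\mu\ne\lambda$. There is a unique $\mathrm{osp}(2|2)$-equivariant quantization map $Q:\operatorname{gr}^{1/2}\mathcal D_{\lambda\mu}\to\mathcal D^{1/2}_{\lambda\mu}$, and it is given, for a homogeneous symbol $(F_1,F_2)$ of parity $p(F)$, by $$Q(F_1,F_2)=F_1\overline D_1+F_2\overline D_2+(-1)^{p(F)}\frac{\lambda}{\lambda-\mu}\big(\overline D_1(F_1)+\overline D_2(F_2)\big).$$
   Context: $C^\infty(S^{1|2})$ consists of $f=f_0(x)+\xi_1f_1(x)+\xi_2f_2(x)+\xi_1\xi_2f_{12}(x)$ with smooth complex-valued coefficients on the circle and odd Grassmann variables $\xi_1,\xi_2$; parity $p(x)=0,p(\xi_i)=1$; $f'=\partial_xf$. $\overline D_i=\partial_{\xi_i}-\xi_i\partial_x$. For homogeneous $f$, $X_f=f\partial_x-(-1)^{p(f)}\tfrac12(\overline D_1(f)\overline D_1+\overline D_2(f)\overline D_2)$; $\mathcal K(2)$ is the Lie superalgebra of all such $X_f$, and $\mathrm{osp}(2|2)$ is spanned by $X_f$ for $f\in\{1,x,x^2,\xi_1\xi_2,\xi_1,\xi_2,x\xi_1,x\xi_2\}$. $\mathcal F_\lambda$ is $C^\infty(S^{1|2})$ with action $L^\lambda_{X_f}=X_f+\lambda f'$. $\mathcal D_{\lambda\mu}$: linear differential operators $\mathcal F_\lambda\to\mathcal F_\mu$ with action $\mathcal L_{X_f}(A)=L^\mu_{X_f}\circ A-(-1)^{p(f)p(A)}A\circ L^\lambda_{X_f}$;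 each is a finite sum $\sum a_{\ell,m,n}\partial_x^\ell\overline D_1^m\overline D_2^n$, $m,n\in\{0,1\}$. $\mathcal D^{1/2}_{\lambda\mu}$ consists of operators $a+b_1\overline D_1+b_2\overline D_2$ with functions $a,b_1,b_2$, and $\operatorname{gr}^{1/2}\mathcal D_{\lambda\mu}=\mathcal D^{1/2}_{\lambda\mu}/\mathcal D^0_{\lambda\mu}$ (with $\mathcal D^0_{\lambda\mu}$ the multiplication operators), whose elements (principal symbols) are identified with pairs $(F_1,F_2)$ = coefficients of $\overline D_1,\overline D_2$; the induced action is $L_{X_f}(F_1,F_2)=(L^{\mu-\lambda-1/2}_{X_f}F_1-\tfrac12\overline D_1\overline D_2(f)F_2,\ L^{\mu-\lambda-1/2}_{X_f}F_2+\tfrac12\overline D_1\overline D_2(f)F_1)$. Symbols are taken homogeneous with $p(F):=p(F_1)=p(F_2)$. A quantization map is a linear map $Q$ (given by a differential expression in $F_1,F_2$) from symbols to operators with $\sigma_{pr}\circ Q=\mathrm{id}$, $\sigma_{pr}$ the principal symbol projection. In the formula, $G\,B$ for a function $G$ and operator $B$ means multiplication by $G$ followed by... i.e. the operator $u\mapsto G\cdot B(u)$; $\overline D_i(F)$ denotes the function obtained by applying $\overline D_i$ to $F$. *)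

theory Defs
  imports "HOL-Analysis.Analysis" "HOL-Library.Function_Algebras"
begin

text \<open>Superfunctions on R^{1|2}: f = f0 + xi1 f1 + xi2 f2 + xi1 xi2 f12 is encoded as a map
  from the index (a,b) (meaning xi1^a xi2^b) to the complex-valued coefficient function.\<close>

type_synonym sfun = "bool \<times> bool \<Rightarrow> real \<Rightarrow> complex"

definition mk :: "(real \<Rightarrow> complex) \<Rightarrow> (real \<Rightarrow> complex) \<Rightarrow> (real \<Rightarrow> complex) \<Rightarrow> (real \<Rightarrow> complex) \<Rightarrow> sfun" where
  "mk a b c d = (\<lambda>(i, j). if i then (if j then d else b) else (if j then c else a))"

abbreviation c0 :: "sfun \<Rightarrow> real \<Rightarrow> complex" where "c0 f \<equiv> f (False, False)"
abbreviation c1 :: "sfun \<Rightarrow> real \<Rightarrow> complex" where "c1 f \<equiv> f (True, False)"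
abbreviation c2 :: "sfun \<Rightarrow> real \<Rightarrow> complex" where "c2 f \<equiv> f (False, True)"
abbreviation c12 :: "sfun \<Rightarrow> real \<Rightarrow> complex" where "c12 f \<equiv> f (True, True)"

definition dx :: "(real \<Rightarrow> complex) \<Rightarrow> real \<Rightarrow> complex" where
  "dx g = (\<lambda>t. vector_derivative g (at t))"

definition smooth_c :: "(real \<Rightarrow> complex) \<Rightarrow> bool" where
  "smooth_c g \<longleftrightarrow> (\<forall>k t. ((dx ^^ k) g) differentiable (at t))"

definition sfun_ok :: "sfun \<Rightarrow> bool" where
  "sfun_ok f \<longleftrightarrow> (\<forall>i. smooth_c (f i))"

definition scal :: "complex \<Rightarrow> sfun \<Rightarrow> sfun" where
  "scal c f = (\<lambda>i t. c * f i t)"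

definition smul :: "sfun \<Rightarrow> sfun \<Rightarrow> sfun" where
  "smul f g = mk (\<lambda>t. c0 f t * c0 g t)
                 (\<lambda>t. c0 f t * c1 g t + c1 f t * c0 g t)
                 (\<lambda>t. c0 f t * c2 g t + c2 f t * c0 g t)
                 (\<lambda>t. c0 f t * c12 g t + c12 f t * c0 g t + c1 f t * c2 g t - c2 f t * c1 g t)"

text \<open>\<open>\<partial>\<^sub>x\<close>, and \<open>Dbar_i = \<partial>_{xi_i} - xi_i \<partial>_x\<close> written out in components.\<close>
definition pd :: "sfun \<Rightarrow> sfun" where
  "pd f = (\<lambda>i. dx (f i))"

definition D1 :: "sfun \<Rightarrow> sfun" where
  "D1 f = mk (c1 f) (- dx (c0 f)) (c12 f) (- dx (c2 f))"

definition D2 :: "sfun \<Rightarrow> sfun" where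
  "D2 f = mk (c2 f) (- c12 f) (- dx (c0 f)) (dx (c1 f))"

definition par :: "sfun \<Rightarrow> sfun" where
  "par f = mk (c0 f) (- c1 f) (- c2 f) (c12 f)"

definition hom :: "nat \<Rightarrow> sfun \<Rightarrow> bool" where
  "hom p f \<longleftrightarrow> (p = 0 \<and> c1 f = 0 \<and> c2 f = 0) \<or> (p = 1 \<and> c0 f = 0 \<and> c12 f = 0)"

text \<open>The contact vector field X_f (f homogeneous of parity p) and the action on F_lambda.\<close>
definition Xf :: "sfun \<Rightarrow> nat \<Rightarrow> sfun \<Rightarrow> sfun" where
  "Xf f p u = smul f (pd u) - scal ((-1) ^ p / 2) (smul (D1 f) (D1 u) + smul (D2 f) (D2 u))"

definition Lw :: "complex \<Rightarrow> sfun \<Rightarrow> nat \<Rightarrow> sfun \<Rightarrow> sfun" where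
  "Lw lam f p u = Xf f p u + scal lam (smul (pd f) u)"

text \<open>Generators of osp(2|2): X_f for f in {1,x,x^2,xi1 xi2,xi1,xi2,x xi1,x xi2}, with parities.\<close>
definition osp_gens :: "(sfun \<times> nat) set" where
  "osp_gens =
    {(mk (\<lambda>t. 1) 0 0 0, 0), (mk (\<lambda>t. complex_of_real t) 0 0 0, 0),
     (mk (\<lambda>t. (complex_of_real t)^2) 0 0 0, 0), (mk 0 0 0 (\<lambda>t. 1), 0),
     (mk 0 (\<lambda>t. 1) 0 0, 1), (mk 0 0 (\<lambda>t. 1) 0, 1),
     (mk 0 (\<lambda>t. complex_of_real t) 0 0, 1), (mk 0 0 (\<lambda>t. complex_of_real t) 0, 1)}"

text \<open>Action on operators D_{lambda mu}; a general operator is split into its even and odd parts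
  so that the sign (-1)^{p(f)p(A)} extends linearly.\<close>
definition op_ev :: "(sfun \<Rightarrow> sfun) \<Rightarrow> sfun \<Rightarrow> sfun" where
  "op_ev A = (\<lambda>u. scal (1/2) (A u + par (A (par u))))"

definition op_od :: "(sfun \<Rightarrow> sfun) \<Rightarrow> sfun \<Rightarrow> sfun" where
  "op_od A = (\<lambda>u. scal (1/2) (A u - par (A (par u))))"

definition Lop :: "complex \<Rightarrow> complex \<Rightarrow> sfun \<Rightarrow> nat \<Rightarrow> (sfun \<Rightarrow> sfun) \<Rightarrow> sfun \<Rightarrow> sfun" where
  "Lop lam mu f p A = (\<lambda>u. Lw mu f p (A u) - op_ev A (Lw lam f p u)
                              - scal ((-1) ^ p) (op_od A (Lw lam f p u)))"

text \<open>Action on principal symbols (F1,F2) in gr^{1/2} D_{lambda mu}.\<close>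
definition Lsym :: "complex \<Rightarrow> complex \<Rightarrow> sfun \<Rightarrow> nat \<Rightarrow> sfun \<times> sfun \<Rightarrow> sfun \<times> sfun" where
  "Lsym lam mu f p F =
     (let nu = mu - lam - 1/2 in
      (Lw nu f p (fst F) - scal (1/2) (smul (D1 (D2 f)) (snd F)),
       Lw nu f p (snd F) + scal (1/2) (smul (D1 (D2 f)) (fst F))))"

definition diffop :: "(sfun \<Rightarrow> sfun) \<Rightarrow> bool" where
  "diffop A \<longleftrightarrow> (\<exists>N a. (\<forall>l m n. sfun_ok (a l m n)) \<and>
     (\<forall>u. sfun_ok u \<longrightarrow>
        A u = (\<Sum>l\<le>N. \<Sum>m<2. \<Sum>n<2. smul (a l m n) ((pd ^^ l) ((D1 ^^ m) ((D2 ^^ n) u))))))"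

text \<open>Quantization maps gr^{1/2} D \<rightarrow> D^{1/2} given by a differential expression in (F1,F2):
  Q(F1,F2) = F1 Dbar1 + F2 Dbar2 + c(F1,F2), with c a differential expression
  (this encodes sigma_pr o Q = id).\<close>
definition is_quant :: "(sfun \<times> sfun \<Rightarrow> sfun \<Rightarrow> sfun) \<Rightarrow> bool" where
  "is_quant Q \<longleftrightarrow> (\<exists>A1 A2. diffop A1 \<and> diffop A2 \<and>
     (\<forall>F1 F2 u. sfun_ok F1 \<and> sfun_ok F2 \<and> sfun_ok u \<longrightarrow>
        Q (F1, F2) u = smul F1 (D1 u) + smul F2 (D2 u) + smul (A1 F1 + A2 F2) u))"

text \<open>osp(2|2)-equivariance (checked on the spanning generators and homogeneous symbols).\<close>
definition osp_equivariant :: "complex \<Rightarrow> complex \<Rightarrow> (sfun \<times> sfun \<Rightarrow> sfun \<Rightarrow> sfun) \<Rightarrow> bool" where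
  "osp_equivariant lam mu Q \<longleftrightarrow>
     (\<forall>(f, p) \<in> osp_gens. \<forall>F1 F2 q u.
        sfun_ok F1 \<and> sfun_ok F2 \<and> hom q F1 \<and> hom q F2 \<and> sfun_ok u \<longrightarrow>
        Lop lam mu f p (Q (F1, F2)) u = Q (Lsym lam mu f p (F1, F2)) u)"

end

theory Submission
  imports Defs
begin

text \<open>Existence is a direct computation: the operator \<open>F\<^sub>1 D\<^sub>1 + F\<^sub>2 D\<^sub>2 + c (D\<^sub>1 F\<^sub>1 + D\<^sub>2 F\<^sub>2)\<close>
  (with the parity sign) commutes with each of the eight generators of \<open>osp(2|2)\<close> for
  \<open>c = \<lambda> / (\<lambda> - \<mu>)\<close>. For uniqueness, two quantizations with the same principal symbol differ by a
  multiplication operator, and evaluating at the constant function \<open>1\<close> shows that this difference,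
  as a function of the symbol, intertwines the action on symbols with the action on densities of
  weight \<open>\<mu> - \<lambda>\<close>. A quadratic Casimir element of \<open>osp(2|2)\<close> acts on symbols by the scalar
  \<open>w - w\<^sup>2\<close> and on densities of weight \<open>w = \<mu> - \<lambda>\<close> by \<open>-w\<^sup>2\<close>; for \<open>\<mu> \<noteq> \<lambda>\<close> these differ, so the
  intertwiner vanishes.\<close>

section \<open>Smooth coefficient functions\<close>

lemma smooth_c_differentiable: "smooth_c g \<Longrightarrow> g differentiable (at t)"
  unfolding smooth_c_def by (metis funpow_0)

lemma smooth_c_dx: "smooth_c g \<Longrightarrow> smooth_c (dx g)"
  unfolding smooth_c_def by (metis funpow_Suc_right o_apply)

lemma dx_add_differentiable:
  "(\<And>t. f differentiable (at t)) \<Longrightarrow> (\<And>t. g differentiable (at t)) \<Longrightarrow>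
   dx (\<lambda>t. f t + g t) = (\<lambda>t. dx f t + dx g t)"
  by (simp add: dx_def)

lemma dx_mult_differentiable:
  "(\<And>t. f differentiable (at t)) \<Longrightarrow> (\<And>t. g differentiable (at t)) \<Longrightarrow>
   dx (\<lambda>t. f t * g t) = (\<lambda>t. f t * dx g t + dx f t * g t)"
  by (simp add: dx_def)

lemma funpow_dx_add:
  assumes "\<And>j t. j < k \<Longrightarrow> (dx ^^ j) f differentiable (at t) \<and> (dx ^^ j) g differentiable (at t)"
  shows "(dx ^^ k) (\<lambda>t. f t + g t) = (\<lambda>t. (dx ^^ k) f t + (dx ^^ k) g t)"
  using assms
proof (induction k arbitrary: f g)
  case 0
  then show ?case by simp
next
  case (Suc k)
  have "dx (\<lambda>t. f t + g t) = (\<lambda>t. dx f t + dx g t)"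
    using Suc.prems[of 0] by (intro dx_add_differentiable) auto
  moreover have "(dx ^^ k) (\<lambda>t. dx f t + dx g t) = (\<lambda>t. (dx ^^ k) (dx f) t + (dx ^^ k) (dx g) t)"
    using Suc.prems[of "Suc _"] by (intro Suc.IH) (simp add: funpow_Suc_right del: funpow.simps)
  ultimately show ?case
    by (simp add: funpow_Suc_right del: funpow.simps)
qed

lemma smooth_c_add: "smooth_c f \<Longrightarrow> smooth_c g \<Longrightarrow> smooth_c (\<lambda>t. f t + g t)"
  unfolding smooth_c_def by (subst funpow_dx_add) auto

text \<open>The induction carries all derivatives up to order \<open>k\<close>, because the \<open>k\<close>-th derivative of a
  product is the \<open>(k-1)\<close>-th derivative of a sum, which splits only once the lower derivatives of
  the summands are known to exist.\<close>

lemma smooth_c_mult: "smooth_c f \<Longrightarrow> smooth_c g \<Longrightarrow> smooth_c (\<lambda>t. f t * g t)"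
proof -
  have "\<forall>f g. smooth_c f \<and> smooth_c g \<longrightarrow> (\<forall>j\<le>k. \<forall>t. (dx ^^ j) (\<lambda>t. f t * g t) differentiable (at t))"
    for k
  proof (induction k)
    case 0
    then show ?case by (auto intro!: differentiable_mult simp: smooth_c_differentiable)
  next
    case (Suc k)
    show ?case
    proof (intro allI impI)
      fix f g j t
      assume fg: "smooth_c f \<and> smooth_c g" and j: "j \<le> Suc k"
      show "(dx ^^ j) (\<lambda>t. f t * g t) differentiable (at t)"
      proof (cases j)
        case 0
        then show ?thesis using fg by (auto intro!: differentiable_mult simp: smooth_c_differentiable)
      next
        case (Suc i)
        have IH: "\<forall>i'\<le>k. \<forall>t. (dx ^^ i') (\<lambda>t. f t * dx g t) differentiable (at t)"
          "\<forall>i'\<le>k. \<forall>t. (dx ^^ i') (\<lambda>t. dx f t * g t) differentiable (at t)"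
          using Suc.IH fg smooth_c_dx by blast+
        have "dx (\<lambda>t. f t * g t) = (\<lambda>t. f t * dx g t + dx f t * g t)"
          using fg by (intro dx_mult_differentiable) (auto simp: smooth_c_differentiable)
        then have "(dx ^^ j) (\<lambda>t. f t * g t)
            = (\<lambda>t. (dx ^^ i) (\<lambda>t. f t * dx g t) t + (dx ^^ i) (\<lambda>t. dx f t * g t) t)"
          using Suc j IH by (simp add: funpow_Suc_right funpow_dx_add del: funpow.simps)
        then show ?thesis
          using IH Suc j by (auto intro!: differentiable_add)
      qed
    qed
  qed
  then show "smooth_c f \<Longrightarrow> smooth_c g \<Longrightarrow> ?thesis"
    unfolding smooth_c_def by blast
qed

lemma dx_const [simp]: "dx (\<lambda>t. c) = (\<lambda>t. 0)"
  by (simp add: dx_def)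

lemma funpow_dx_const: "(dx ^^ Suc k) (\<lambda>t. c) = (\<lambda>t. 0)"
  by (induction k) (simp_all add: funpow_Suc_right del: funpow.simps)

lemma smooth_c_const [simp]: "smooth_c (\<lambda>t. c)"
  unfolding smooth_c_def
proof (intro allI)
  fix k t
  show "(dx ^^ k) (\<lambda>t. c) differentiable (at t)"
    by (cases k) (simp_all add: funpow_dx_const del: funpow.simps)
qed

lemma dx_of_real [simp]: "dx (\<lambda>t. complex_of_real t) = (\<lambda>t. 1)"
  unfolding dx_def by (auto intro!: ext vector_derivative_at derivative_eq_intros)

lemma smooth_c_of_real [simp]: "smooth_c (\<lambda>t. complex_of_real t)"
  unfolding smooth_c_def
proof (intro allI)
  fix k t
  show "(dx ^^ k) (\<lambda>t. complex_of_real t) differentiable (at t)"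
  proof (cases k)
    case 0
    then show ?thesis by (simp add: differentiable_def) (auto intro!: derivative_eq_intros)
  next
    case (Suc k')
    then show ?thesis
      using smooth_c_const[of 1] unfolding smooth_c_def
      by (simp add: funpow_Suc_right del: funpow.simps)
  qed
qed

lemma smooth_c_minus: "smooth_c f \<Longrightarrow> smooth_c (\<lambda>t. - f t)"
  using smooth_c_mult[of "\<lambda>t. -1" f] by simp

lemma smooth_c_diff: "smooth_c f \<Longrightarrow> smooth_c g \<Longrightarrow> smooth_c (\<lambda>t. f t - g t)"
  using smooth_c_add[of f "\<lambda>t. - g t"] smooth_c_minus[of g] by simp

lemma smooth_c_divide: "smooth_c f \<Longrightarrow> smooth_c (\<lambda>t. f t / c)"
  using smooth_c_mult[of "\<lambda>t. 1 / c" f] by simp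

lemmas smooth_c_intros =
  smooth_c_add smooth_c_mult smooth_c_minus smooth_c_diff smooth_c_divide smooth_c_dx
  smooth_c_const smooth_c_of_real

lemma dx_add [simp]: "smooth_c f \<Longrightarrow> smooth_c g \<Longrightarrow> dx (\<lambda>t. f t + g t) = (\<lambda>t. dx f t + dx g t)"
  by (simp add: dx_add_differentiable smooth_c_differentiable)

lemma dx_mult [simp]:
  "smooth_c f \<Longrightarrow> smooth_c g \<Longrightarrow> dx (\<lambda>t. f t * g t) = (\<lambda>t. f t * dx g t + dx f t * g t)"
  by (simp add: dx_mult_differentiable smooth_c_differentiable)

lemma dx_minus [simp]: "smooth_c f \<Longrightarrow> dx (\<lambda>t. - f t) = (\<lambda>t. - dx f t)"
  by (simp add: dx_def smooth_c_differentiable)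

lemma dx_diff [simp]: "smooth_c f \<Longrightarrow> smooth_c g \<Longrightarrow> dx (\<lambda>t. f t - g t) = (\<lambda>t. dx f t - dx g t)"
  by (simp add: dx_def smooth_c_differentiable)

lemma dx_divide [simp]: "smooth_c f \<Longrightarrow> dx (\<lambda>t. f t / c) = (\<lambda>t. dx f t / c)"
  using dx_mult[of "\<lambda>t. 1 / c" f] by simp

lemma mk_components [simp]:
  "c0 (mk a b c d) = a" "c1 (mk a b c d) = b" "c2 (mk a b c d) = c" "c12 (mk a b c d) = d"
  by (simp_all add: mk_def)

lemma sfun_eqI:
  "(\<And>t. c0 f t = c0 g t) \<Longrightarrow> (\<And>t. c1 f t = c1 g t) \<Longrightarrow>
   (\<And>t. c2 f t = c2 g t) \<Longrightarrow> (\<And>t. c12 f t = c12 g t) \<Longrightarrow> f = g"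
  by (intro ext) (metis (full_types) prod.exhaust)

lemma sfun_ok_iff: "sfun_ok f \<longleftrightarrow> smooth_c (c0 f) \<and> smooth_c (c1 f) \<and> smooth_c (c2 f) \<and> smooth_c (c12 f)"
  unfolding sfun_ok_def by (metis (full_types) prod.exhaust)

lemma sfun_ok_smooth_c [simp]: "sfun_ok f \<Longrightarrow> smooth_c (f i)"
  unfolding sfun_ok_def by blast

lemmas component_defs = smul_def scal_def pd_def D1_def D2_def par_def Xf_def Lw_def Lop_def
  op_ev_def op_od_def Lsym_def plus_fun_def fun_diff_def fun_Compl_def zero_fun_def Let_def
  power2_eq_square

lemma sfun_ok_mk [simp]: "sfun_ok (mk a b c d) \<longleftrightarrow> smooth_c a \<and> smooth_c b \<and> smooth_c c \<and> smooth_c d"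
  by (simp add: sfun_ok_iff del: sfun_ok_smooth_c)

lemma sfun_ok_add [simp]: "sfun_ok f \<Longrightarrow> sfun_ok g \<Longrightarrow> sfun_ok (f + g)"
  and sfun_ok_diff [simp]: "sfun_ok f \<Longrightarrow> sfun_ok g \<Longrightarrow> sfun_ok (f - g)"
  and sfun_ok_zero [simp]: "sfun_ok 0"
  and sfun_ok_smul [simp]: "sfun_ok f \<Longrightarrow> sfun_ok g \<Longrightarrow> sfun_ok (smul f g)"
  and sfun_ok_scal [simp]: "sfun_ok f \<Longrightarrow> sfun_ok (scal k f)"
  and sfun_ok_pd [simp]: "sfun_ok f \<Longrightarrow> sfun_ok (pd f)"
  and sfun_ok_D1 [simp]: "sfun_ok f \<Longrightarrow> sfun_ok (D1 f)"
  and sfun_ok_D2 [simp]: "sfun_ok f \<Longrightarrow> sfun_ok (D2 f)"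
  and sfun_ok_par [simp]: "sfun_ok f \<Longrightarrow> sfun_ok (par f)"
  by (simp_all add: sfun_ok_iff component_defs smooth_c_intros del: sfun_ok_smooth_c)

lemma sfun_ok_Lw [simp]: "sfun_ok f \<Longrightarrow> sfun_ok u \<Longrightarrow> sfun_ok (Lw lam f p u)"
  by (simp add: Lw_def Xf_def)

lemma sfun_ok_sum: "(\<And>x. x \<in> S \<Longrightarrow> sfun_ok (f x)) \<Longrightarrow> sfun_ok (\<Sum>x\<in>S. f x)"
  by (induction S rule: infinite_finite_induct) auto

lemma sum_sfun_apply: "(\<Sum>x\<in>S. (f x :: sfun)) i t = (\<Sum>x\<in>S. f x i t)"
  by (induction S rule: infinite_finite_induct) auto

lemma smul_add_right: "smul a (x + y) = smul a x + smul a y"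
  by (rule sfun_eqI) (simp_all add: component_defs algebra_simps)

lemma smul_scal_right: "smul a (scal k x) = scal k (smul a x)"
  by (rule sfun_eqI) (simp_all add: component_defs algebra_simps)

lemma smul_zero_right [simp]: "smul X 0 = 0"
  by (rule sfun_eqI) (simp_all add: component_defs)

lemma scal_add_right: "scal k (x + y) = scal k x + scal k y"
  by (rule sfun_eqI) (simp_all add: component_defs algebra_simps)

lemma scal_diff_right: "scal k (x - y) = scal k x - scal k y"
  by (rule sfun_eqI) (simp_all add: component_defs algebra_simps)

lemma scal_scal: "scal a (scal b x) = scal (b * a) x"
  by (simp add: scal_def mult.assoc mult.commute)

lemma scal_sum: "scal k (\<Sum>x\<in>S. f x) = (\<Sum>x\<in>S. scal k (f x))"
  by (rule sfun_eqI) (simp_all add: sum_sfun_apply scal_def sum_distrib_left)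

lemma scal_cancel: "scal a X = scal b X \<Longrightarrow> a \<noteq> b \<Longrightarrow> X = 0"
  unfolding scal_def by (auto simp: fun_eq_iff)

lemma diff_eq_add_scal: "(x :: sfun) - y = x + scal (-1) y"
  by (rule sfun_eqI) (simp_all add: component_defs)

lemma par_add: "par (x + y) = par x + par y"
  by (rule sfun_eqI) (simp_all add: component_defs)

lemma Lw_add: "sfun_ok f \<Longrightarrow> sfun_ok u \<Longrightarrow> sfun_ok v \<Longrightarrow> Lw lam f p (u + v) = Lw lam f p u + Lw lam f p v"
  by (rule sfun_eqI) (simp_all add: component_defs algebra_simps add_divide_distrib diff_divide_distrib)

lemma Lw_diff: "sfun_ok f \<Longrightarrow> sfun_ok u \<Longrightarrow> sfun_ok v \<Longrightarrow> Lw lam f p (u - v) = Lw lam f p u - Lw lam f p v"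
  by (rule sfun_eqI) (simp_all add: component_defs algebra_simps add_divide_distrib diff_divide_distrib)

lemma par_hom: "hom q F \<Longrightarrow> par F = scal ((-1) ^ q) F"
  unfolding hom_def by (auto intro!: sfun_eqI simp: par_def scal_def)

lemma hom_pd: "hom p f \<Longrightarrow> hom p (pd f)"
  unfolding hom_def pd_def by (auto simp: zero_fun_def)

lemma hom_scal: "hom p w \<Longrightarrow> hom p (scal k w)"
  unfolding hom_def scal_def by (auto simp: zero_fun_def)

definition even_part :: "sfun \<Rightarrow> sfun" where
  "even_part F = mk (c0 F) 0 0 (c12 F)"

definition odd_part :: "sfun \<Rightarrow> sfun" where
  "odd_part F = mk 0 (c1 F) (c2 F) 0"

lemma even_part_add_odd_part: "even_part F + odd_part F = F"
  by (rule sfun_eqI) (simp_all add: even_part_def odd_part_def plus_fun_def zero_fun_def)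

lemma hom_even_part: "hom 0 (even_part F)"
  and hom_odd_part: "hom 1 (odd_part F)"
  by (simp_all add: hom_def even_part_def odd_part_def)

lemma sfun_ok_even_part: "sfun_ok F \<Longrightarrow> sfun_ok (even_part F)"
  and sfun_ok_odd_part: "sfun_ok F \<Longrightarrow> sfun_ok (odd_part F)"
  by (simp_all add: even_part_def odd_part_def zero_fun_def)

abbreviation "gen_1 \<equiv> mk (\<lambda>t. 1) 0 0 0"
abbreviation "gen_x \<equiv> mk (\<lambda>t. complex_of_real t) 0 0 0"
abbreviation "gen_x2 \<equiv> mk (\<lambda>t. (complex_of_real t)\<^sup>2) 0 0 0"
abbreviation "gen_xi12 \<equiv> mk 0 0 0 (\<lambda>t. 1)"
abbreviation "gen_xi1 \<equiv> mk 0 (\<lambda>t. 1) 0 0"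
abbreviation "gen_xi2 \<equiv> mk 0 0 (\<lambda>t. 1) 0"
abbreviation "gen_x_xi1 \<equiv> mk 0 (\<lambda>t. complex_of_real t) 0 0"
abbreviation "gen_x_xi2 \<equiv> mk 0 0 (\<lambda>t. complex_of_real t) 0"

lemma osp_gens_mem:
  "(gen_1, 0) \<in> osp_gens" "(gen_x, 0) \<in> osp_gens" "(gen_x2, 0) \<in> osp_gens" "(gen_xi12, 0) \<in> osp_gens"
  "(gen_xi1, 1) \<in> osp_gens" "(gen_xi2, 1) \<in> osp_gens" "(gen_x_xi1, 1) \<in> osp_gens" "(gen_x_xi2, 1) \<in> osp_gens"
  unfolding osp_gens_def by simp_all

lemma sfun_ok_osp_gens: "(f, p) \<in> osp_gens \<Longrightarrow> sfun_ok f"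
  unfolding osp_gens_def by (auto simp: smooth_c_intros zero_fun_def power2_eq_square)

lemma hom_osp_gens: "(f, p) \<in> osp_gens \<Longrightarrow> hom p f"
  unfolding osp_gens_def by (elim insertE emptyE; simp add: hom_def zero_fun_def)

lemma pd_add: "sfun_ok u \<Longrightarrow> sfun_ok v \<Longrightarrow> pd (u + v) = pd u + pd v"
  and D1_add: "sfun_ok u \<Longrightarrow> sfun_ok v \<Longrightarrow> D1 (u + v) = D1 u + D1 v"
  and D2_add: "sfun_ok u \<Longrightarrow> sfun_ok v \<Longrightarrow> D2 (u + v) = D2 u + D2 v"
  and pd_scal: "sfun_ok u \<Longrightarrow> pd (scal k u) = scal k (pd u)"
  and D1_scal: "sfun_ok u \<Longrightarrow> D1 (scal k u) = scal k (D1 u)"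
  and D2_scal: "sfun_ok u \<Longrightarrow> D2 (scal k u) = scal k (D2 u)"
  by (rule sfun_eqI; simp add: component_defs)+

lemma sfun_ok_funpow: "(\<And>u. sfun_ok u \<Longrightarrow> sfun_ok (T u)) \<Longrightarrow> sfun_ok u \<Longrightarrow> sfun_ok ((T ^^ l) u)"
  by (induction l) auto

lemma funpow_add:
  assumes "\<And>u. sfun_ok u \<Longrightarrow> sfun_ok (T u)"
    and "\<And>u v. sfun_ok u \<Longrightarrow> sfun_ok v \<Longrightarrow> T (u + v) = T u + T v"
  shows "sfun_ok u \<Longrightarrow> sfun_ok v \<Longrightarrow> (T ^^ l) (u + v) = (T ^^ l) u + (T ^^ l) v"
  by (induction l) (auto simp: assms sfun_ok_funpow)

lemma funpow_scal:
  assumes "\<And>u. sfun_ok u \<Longrightarrow> sfun_ok (T u)"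
    and "\<And>u. sfun_ok u \<Longrightarrow> T (scal k u) = scal k (T u)"
  shows "sfun_ok u \<Longrightarrow> (T ^^ l) (scal k u) = scal k ((T ^^ l) u)"
  by (induction l) (auto simp: assms sfun_ok_funpow)

definition monomial_op :: "nat \<Rightarrow> nat \<Rightarrow> nat \<Rightarrow> sfun \<Rightarrow> sfun" where
  "monomial_op l m n u = (pd ^^ l) ((D1 ^^ m) ((D2 ^^ n) u))"

lemma sfun_ok_monomial_op: "sfun_ok u \<Longrightarrow> sfun_ok (monomial_op l m n u)"
  unfolding monomial_op_def by (intro sfun_ok_funpow sfun_ok_pd sfun_ok_D1 sfun_ok_D2)

lemma monomial_op_add:
  "sfun_ok u \<Longrightarrow> sfun_ok v \<Longrightarrow> monomial_op l m n (u + v) = monomial_op l m n u + monomial_op l m n v"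
  unfolding monomial_op_def by (simp add: funpow_add sfun_ok_funpow pd_add D1_add D2_add)

lemma monomial_op_scal: "sfun_ok u \<Longrightarrow> monomial_op l m n (scal k u) = scal k (monomial_op l m n u)"
  unfolding monomial_op_def by (simp add: funpow_scal sfun_ok_funpow pd_scal D1_scal D2_scal)

lemma diffopE:
  assumes "diffop A"
  obtains N a where "\<And>l m n. sfun_ok (a l m n)"
    "\<And>u. sfun_ok u \<Longrightarrow> A u = (\<Sum>l\<le>N. \<Sum>m<2. \<Sum>n<2. smul (a l m n) (monomial_op l m n u))"
  using assms unfolding diffop_def monomial_op_def by blast

lemma diffop_sfun_ok: "diffop A \<Longrightarrow> sfun_ok u \<Longrightarrow> sfun_ok (A u)"
  by (erule diffopE) (auto intro!: sfun_ok_sum simp: sfun_ok_monomial_op)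

lemma diffop_add: "diffop A \<Longrightarrow> sfun_ok u \<Longrightarrow> sfun_ok v \<Longrightarrow> A (u + v) = A u + A v"
  by (erule diffopE) (simp add: monomial_op_add smul_add_right sum.distrib)

lemma diffop_scal: "diffop A \<Longrightarrow> sfun_ok u \<Longrightarrow> A (scal k u) = scal k (A u)"
  by (erule diffopE) (simp add: monomial_op_scal smul_scal_right scal_sum)

lemma diffop_diff: "diffop A \<Longrightarrow> sfun_ok u \<Longrightarrow> sfun_ok v \<Longrightarrow> A (u - v) = A u - A v"
  by (metis diff_eq_add_scal diffop_add diffop_scal sfun_ok_scal)

section \<open>The equivariant quantization\<close>

text \<open>The sign \<open>(-1)\<^bsup>p(F)\<^esup>\<close> of the paper is realised by the parity operator, which makes the map
  linear in the symbol without any homogeneity assumption.\<close>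

definition quant :: "complex \<Rightarrow> sfun \<times> sfun \<Rightarrow> sfun \<Rightarrow> sfun" where
  "quant c = (\<lambda>(F1, F2) u. smul F1 (D1 u) + smul F2 (D2 u) + smul (scal c (D1 (par F1) + D2 (par F2))) u)"

lemma quant_hom:
  assumes "hom q F1" "hom q F2" "sfun_ok F1" "sfun_ok F2"
  shows "quant c (F1, F2) u = smul F1 (D1 u) + smul F2 (D2 u) + smul (scal ((-1) ^ q * c) (D1 F1 + D2 F2)) u"
proof -
  have "D1 (par F1) + D2 (par F2) = scal ((-1) ^ q) (D1 F1 + D2 F2)"
    using assms by (simp add: par_hom D1_scal D2_scal scal_add_right)
  then show ?thesis
    by (simp add: quant_def scal_scal)
qed

text \<open>The tables are \<open>c\<close> times the coefficients in \<open>D\<^sub>1 \<circ> par = -D\<^sub>1 - 2\<xi>\<^sub>1\<partial>\<^sub>x - 2\<xi>\<^sub>2D\<^sub>1D\<^sub>2 + 4\<xi>\<^sub>1\<xi>\<^sub>2\<partial>\<^sub>xD\<^sub>2\<close> and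
  \<open>D\<^sub>2 \<circ> par = -D\<^sub>2 + 2\<xi>\<^sub>1D\<^sub>1D\<^sub>2 - 2\<xi>\<^sub>2\<partial>\<^sub>x - 4\<xi>\<^sub>1\<xi>\<^sub>2\<partial>\<^sub>xD\<^sub>1\<close>.\<close>

definition D1_par_coeff :: "complex \<Rightarrow> nat \<Rightarrow> nat \<Rightarrow> nat \<Rightarrow> sfun" where
  "D1_par_coeff c l m n =
    (if (l, m, n) = (0, 1, 0) then mk (\<lambda>t. - c) (\<lambda>t. 0) (\<lambda>t. 0) (\<lambda>t. 0)
     else if (l, m, n) = (1, 0, 0) then mk (\<lambda>t. 0) (\<lambda>t. - 2 * c) (\<lambda>t. 0) (\<lambda>t. 0)
     else if (l, m, n) = (0, 1, 1) then mk (\<lambda>t. 0) (\<lambda>t. 0) (\<lambda>t. - 2 * c) (\<lambda>t. 0)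
     else if (l, m, n) = (1, 0, 1) then mk (\<lambda>t. 0) (\<lambda>t. 0) (\<lambda>t. 0) (\<lambda>t. 4 * c)
     else 0)"

definition D2_par_coeff :: "complex \<Rightarrow> nat \<Rightarrow> nat \<Rightarrow> nat \<Rightarrow> sfun" where
  "D2_par_coeff c l m n =
    (if (l, m, n) = (0, 0, 1) then mk (\<lambda>t. - c) (\<lambda>t. 0) (\<lambda>t. 0) (\<lambda>t. 0)
     else if (l, m, n) = (0, 1, 1) then mk (\<lambda>t. 0) (\<lambda>t. 2 * c) (\<lambda>t. 0) (\<lambda>t. 0)
     else if (l, m, n) = (1, 0, 0) then mk (\<lambda>t. 0) (\<lambda>t. 0) (\<lambda>t. - 2 * c) (\<lambda>t. 0)
     else if (l, m, n) = (1, 1, 0) then mk (\<lambda>t. 0) (\<lambda>t. 0) (\<lambda>t. 0) (\<lambda>t. - 4 * c)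
     else 0)"

lemma diffop_D1_par: "diffop (\<lambda>F. scal c (D1 (par F)))"
  unfolding diffop_def
proof (intro exI conjI allI impI)
  show "sfun_ok (D1_par_coeff c l m n)" for l m n
    by (simp add: D1_par_coeff_def)
  show "scal c (D1 (par u)) = (\<Sum>l\<le>1. \<Sum>m<2. \<Sum>n<2. smul (D1_par_coeff c l m n) ((pd ^^ l) ((D1 ^^ m) ((D2 ^^ n) u))))"
    if "sfun_ok u" for u
    using that by (intro sfun_eqI)
      (simp_all add: sum_sfun_apply numeral_2_eq_2 lessThan_Suc atMost_Suc D1_par_coeff_def component_defs)
qed

lemma diffop_D2_par: "diffop (\<lambda>F. scal c (D2 (par F)))"
  unfolding diffop_def
proof (intro exI conjI allI impI)
  show "sfun_ok (D2_par_coeff c l m n)" for l m n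
    by (simp add: D2_par_coeff_def)
  show "scal c (D2 (par u)) = (\<Sum>l\<le>1. \<Sum>m<2. \<Sum>n<2. smul (D2_par_coeff c l m n) ((pd ^^ l) ((D1 ^^ m) ((D2 ^^ n) u))))"
    if "sfun_ok u" for u
    using that by (intro sfun_eqI)
      (simp_all add: sum_sfun_apply numeral_2_eq_2 lessThan_Suc atMost_Suc D2_par_coeff_def component_defs)
qed

lemma is_quant_quant: "is_quant (quant c)"
  unfolding is_quant_def
proof (intro exI conjI allI impI)
  show "diffop (\<lambda>F. scal c (D1 (par F)))"
    by (fact diffop_D1_par)
  show "diffop (\<lambda>F. scal c (D2 (par F)))"
    by (fact diffop_D2_par)
  show "quant c (F1, F2) u
      = smul F1 (D1 u) + smul F2 (D2 u) + smul (scal c (D1 (par F1)) + scal c (D2 (par F2))) u"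
    for F1 F2 u
    by (rule sfun_eqI) (simp_all add: quant_def component_defs algebra_simps)
qed

text \<open>A direct verification on each of the eight generators; \<open>c d\<close> and \<open>c d - d\<close> play the
  roles of \<open>\<lambda>\<close> and \<open>\<mu>\<close>, so that \<open>c = \<lambda> / (\<lambda> - \<mu>)\<close>.\<close>

lemma quant_equivariant: "osp_equivariant (c * d) (c * d - d) (quant c)"
  unfolding osp_equivariant_def
proof (intro ballI allI impI, clarify)
  fix f p F1 F2 q u
  assume gen: "(f, p) \<in> osp_gens" and ok: "sfun_ok F1" "sfun_ok F2" "sfun_ok u"
    and hom: "hom q F1" "hom q F2"
  show "Lop (c * d) (c * d - d) f p (quant c (F1, F2)) u = quant c (Lsym (c * d) (c * d - d) f p (F1, F2)) u"
    using hom gen unfolding hom_def osp_gens_def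
    apply (simp only: prod.inject insert_iff empty_iff)
    apply (elim disjE conjE; hypsubst; rule sfun_eqI)
      apply (simp_all add: quant_def component_defs smooth_c_intros ok)
    apply (simp_all add: field_simps)
    done
qed

definition sfun_one :: sfun where
  "sfun_one = mk (\<lambda>t. 1) 0 0 0"

lemma sfun_ok_sfun_one [simp]: "sfun_ok sfun_one"
  by (simp add: sfun_one_def zero_fun_def)

lemma smul_sfun_one [simp]: "smul X sfun_one = X"
  and D1_sfun_one [simp]: "D1 sfun_one = 0"
  and D2_sfun_one [simp]: "D2 sfun_one = 0"
  by (rule sfun_eqI; simp add: sfun_one_def component_defs)+

text \<open>Applying a quantization to the constant \<open>1\<close> isolates its zeroth-order coefficient.\<close>

lemma is_quant_at_one:
  assumes "is_quant Q" "sfun_ok F1" "sfun_ok F2" "sfun_ok u"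
  shows "Q (F1, F2) u = smul F1 (D1 u) + smul F2 (D2 u) + smul (Q (F1, F2) sfun_one) u"
proof -
  obtain A1 A2 where "\<And>F1 F2 u. sfun_ok F1 \<Longrightarrow> sfun_ok F2 \<Longrightarrow> sfun_ok u \<Longrightarrow>
      Q (F1, F2) u = smul F1 (D1 u) + smul F2 (D2 u) + smul (A1 F1 + A2 F2) u"
    using assms(1) unfolding is_quant_def by blast
  then show ?thesis
    using assms(2-4) by simp
qed

lemma is_quant_zeroth_order:
  assumes "is_quant Q"
  obtains A1 A2 where "diffop A1" "diffop A2"
    and "\<And>F1 F2. sfun_ok F1 \<Longrightarrow> sfun_ok F2 \<Longrightarrow> Q (F1, F2) sfun_one = A1 F1 + A2 F2"
proof -
  obtain A1 A2 where "diffop A1" "diffop A2"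
    and "\<And>F1 F2 u. sfun_ok F1 \<Longrightarrow> sfun_ok F2 \<Longrightarrow> sfun_ok u \<Longrightarrow>
      Q (F1, F2) u = smul F1 (D1 u) + smul F2 (D2 u) + smul (A1 F1 + A2 F2) u"
    using assms unfolding is_quant_def by blast
  then show thesis
    using that[of A1 A2] by simp
qed

lemma is_quant_at_one_linear:
  assumes "is_quant Q" "sfun_ok F1" "sfun_ok F2" "sfun_ok G1" "sfun_ok G2"
  shows "sfun_ok (Q (F1, F2) sfun_one)"
    and "Q (F1 + G1, F2 + G2) sfun_one = Q (F1, F2) sfun_one + Q (G1, G2) sfun_one"
    and "Q (F1 - G1, F2 - G2) sfun_one = Q (F1, F2) sfun_one - Q (G1, G2) sfun_one"
    and "Q (scal k F1, scal k F2) sfun_one = scal k (Q (F1, F2) sfun_one)"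
proof -
  obtain A1 A2 where A: "diffop A1" "diffop A2"
    and Q: "\<And>G1 G2. sfun_ok G1 \<Longrightarrow> sfun_ok G2 \<Longrightarrow> Q (G1, G2) sfun_one = A1 G1 + A2 G2"
    using is_quant_zeroth_order[OF assms(1)] by metis
  show "sfun_ok (Q (F1, F2) sfun_one)"
    using assms by (simp add: Q diffop_sfun_ok[OF A(1)] diffop_sfun_ok[OF A(2)])
  show "Q (F1 + G1, F2 + G2) sfun_one = Q (F1, F2) sfun_one + Q (G1, G2) sfun_one"
    using assms by (simp add: Q diffop_add[OF A(1)] diffop_add[OF A(2)])
  show "Q (F1 - G1, F2 - G2) sfun_one = Q (F1, F2) sfun_one - Q (G1, G2) sfun_one"
    using assms by (simp add: Q diffop_diff[OF A(1)] diffop_diff[OF A(2)])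
  show "Q (scal k F1, scal k F2) sfun_one = scal k (Q (F1, F2) sfun_one)"
    using assms by (simp add: Q diffop_scal[OF A(1)] diffop_scal[OF A(2)] scal_add_right)
qed

lemma Lw_sfun_one: "sfun_ok f \<Longrightarrow> Lw lam f p sfun_one = scal lam (pd f)"
  by (rule sfun_eqI) (simp_all add: component_defs sfun_one_def)

lemma op_ev_add:
  "R v = P v + S v \<Longrightarrow> R (par v) = P (par v) + S (par v) \<Longrightarrow> op_ev R v = op_ev P v + op_ev S v"
  and op_od_add:
  "R v = P v + S v \<Longrightarrow> R (par v) = P (par v) + S (par v) \<Longrightarrow> op_od R v = op_od P v + op_od S v"
  by (simp_all add: op_ev_def op_od_def par_add scal_add_right scal_diff_right algebra_simps)

text \<open>Super-commutativity: the sign rule in \<open>Lop\<close> turns right multiplication by \<open>Z\<close>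
  into left multiplication.\<close>

lemma op_ev_op_od_smul:
  "hom p w \<Longrightarrow> op_ev (smul Z) w + scal ((-1) ^ p) (op_od (smul Z) w) = smul w Z"
  unfolding hom_def
  by - (elim disjE conjE; hypsubst; rule sfun_eqI; simp add: component_defs field_simps)

text \<open>The operators \<open>\<partial>\<^sub>x, D\<^sub>1, D\<^sub>2\<close> kill \<open>1\<close>, so at \<open>1\<close> a multiplication part \<open>Z\<close> of \<open>R\<close> contributes
  \<open>L\<^sup>\<mu> Z\<close> from the left and, by super-commutativity, \<open>-\<lambda> f' Z\<close> from \<open>L\<^sup>\<lambda> 1 = \<lambda> f'\<close> on the right.\<close>

lemma Lop_add_mult_at_one:
  assumes "hom p f" "sfun_ok f" "sfun_ok Z"
    and P: "\<And>u. sfun_ok u \<Longrightarrow> sfun_ok (P u)"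
    and R: "\<And>u. sfun_ok u \<Longrightarrow> R u = P u + smul Z u"
  shows "Lop lam mu f p R sfun_one = Lop lam mu f p P sfun_one + Lw (mu - lam) f p Z"
proof -
  define v where "v = Lw lam f p sfun_one"
  have v: "v = scal lam (pd f)" "hom p v" "sfun_ok v"
    using assms(1,2) by (simp_all add: v_def Lw_sfun_one hom_pd hom_scal)
  have "Lop lam mu f p R sfun_one
      = Lw mu f p (P sfun_one) + Lw mu f p Z - (op_ev P v + op_ev (smul Z) v)
        - scal ((-1) ^ p) (op_od P v + op_od (smul Z) v)"
    unfolding Lop_def v_def[symmetric]
    by (simp add: R v(3) op_ev_add op_od_add Lw_add assms(2,3) P)
  also have "\<dots> = Lop lam mu f p P sfun_one
      + (Lw mu f p Z - (op_ev (smul Z) v + scal ((-1) ^ p) (op_od (smul Z) v)))"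
    by (simp add: Lop_def scal_add_right flip: v_def)
  also have "\<dots> = Lop lam mu f p P sfun_one + Lw (mu - lam) f p Z"
    unfolding op_ev_op_od_smul[OF v(2)] unfolding v(1)
    by (rule arg_cong[where f = "(+) _"], rule sfun_eqI) (simp_all add: component_defs algebra_simps)
  finally show ?thesis .
qed

section \<open>The Casimir element\<close>

lemma hom_Lsym:
  assumes "hom p f" "hom q F1" "hom q F2" "sfun_ok f" "sfun_ok F1" "sfun_ok F2"
  shows "hom ((q + p) mod 2) (fst (Lsym lam mu f p (F1, F2)))"
    and "hom ((q + p) mod 2) (snd (Lsym lam mu f p (F1, F2)))"
  using assms(1-3) unfolding hom_def
  by - (elim disjE conjE; simp add: component_defs assms(4-6) smooth_c_intros)+

definition homogeneous_symbol :: "sfun \<times> sfun \<Rightarrow> bool" where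
  "homogeneous_symbol F \<longleftrightarrow> sfun_ok (fst F) \<and> sfun_ok (snd F) \<and> (\<exists>q. hom q (fst F) \<and> hom q (snd F))"

lemma homogeneous_symbol_Lsym:
  assumes "(f, p) \<in> osp_gens" "homogeneous_symbol F"
  shows "homogeneous_symbol (Lsym lam mu f p F)"
proof -
  obtain F1 F2 q where F: "F = (F1, F2)" "sfun_ok F1" "sfun_ok F2" "hom q F1" "hom q F2"
    using assms(2) unfolding homogeneous_symbol_def by (cases F) auto
  have f: "hom p f" "sfun_ok f"
    using assms(1) by (simp_all add: hom_osp_gens sfun_ok_osp_gens)
  show ?thesis
    unfolding homogeneous_symbol_def F(1)
    using hom_Lsym[OF f(1) F(4,5) f(2) F(2,3)] f F(2,3) by (simp add: Lsym_def Let_def) blast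
qed

text \<open>A quadratic Casimir element of \<open>osp(2|2)\<close>, evaluated in a representation \<open>L\<close> of the
  generators; the odd terms carry the factor \<open>2\<close>, written as a repeated subtraction so that
  the definition only needs an additive group.\<close>

definition casimir :: "(sfun \<Rightarrow> nat \<Rightarrow> 'a \<Rightarrow> 'a) \<Rightarrow> 'a \<Rightarrow> 'a::ab_group_add" where
  "casimir L v =
     L gen_1 0 (L gen_x2 0 v) - L gen_x 0 (L gen_x 0 v) - L gen_xi12 0 (L gen_xi12 0 v)
     - L gen_xi1 1 (L gen_x_xi1 1 v) - L gen_xi1 1 (L gen_x_xi1 1 v)
     - L gen_xi2 1 (L gen_x_xi2 1 v) - L gen_xi2 1 (L gen_x_xi2 1 v)"

lemma casimir_intertwining:
  assumes closed: "\<And>f p v. (f, p) \<in> osp_gens \<Longrightarrow> S v \<Longrightarrow> S (L f p v)"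
    and intertwines: "\<And>f p v. (f, p) \<in> osp_gens \<Longrightarrow> S v \<Longrightarrow> T (L f p v) = M f p (T v)"
    and S_V: "\<And>v. S v \<Longrightarrow> V v"
    and V_diff: "\<And>v w. V v \<Longrightarrow> V w \<Longrightarrow> V (v - w)"
    and T_diff: "\<And>v w. V v \<Longrightarrow> V w \<Longrightarrow> T (v - w) = T v - T w"
    and "S v"
  shows "T (casimir L v) = casimir M (T v)"
  using \<open>S v\<close> unfolding casimir_def
  by (simp only: closed intertwines S_V V_diff T_diff osp_gens_mem)

lemma casimir_Lw: "sfun_ok G \<Longrightarrow> casimir (Lw w) G = scal (- w\<^sup>2) G"
  unfolding casimir_def
  by (rule sfun_eqI; simp add: component_defs smooth_c_intros; simp add: field_simps)

lemma casimir_Lsym: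
  assumes "sfun_ok F1" "sfun_ok F2"
  shows "casimir (Lsym lam mu) (F1, F2) = (scal ((mu - lam) - (mu - lam)\<^sup>2) F1, scal ((mu - lam) - (mu - lam)\<^sup>2) F2)"
  unfolding casimir_def prod_eq_iff fst_diff snd_diff
  by (intro conjI; rule sfun_eqI; simp add: component_defs smooth_c_intros assms; simp add: field_simps)

section \<open>Uniqueness\<close>

lemma quant_at_one_intertwines:
  assumes Q: "is_quant Q" "osp_equivariant lam mu Q"
    and Q': "is_quant Q'" "osp_equivariant lam mu Q'"
    and gen: "(f, p) \<in> osp_gens" and F: "homogeneous_symbol F"
  shows "Q (Lsym lam mu f p F) sfun_one - Q' (Lsym lam mu f p F) sfun_one
       = Lw (mu - lam) f p (Q F sfun_one - Q' F sfun_one)"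
proof -
  obtain F1 F2 q where F_eq: "F = (F1, F2)" and ok: "sfun_ok F1" "sfun_ok F2" and hom: "hom q F1" "hom q F2"
    using F unfolding homogeneous_symbol_def by (cases F) auto
  have f: "hom p f" "sfun_ok f"
    using gen by (simp_all add: hom_osp_gens sfun_ok_osp_gens)
  define P where "P u = smul F1 (D1 u) + smul F2 (D2 u)" for u
  have P_ok: "sfun_ok (P u)" if "sfun_ok u" for u
    using that ok by (simp add: P_def)
  have Lsym_at_one: "Q (Lsym lam mu f p (F1, F2)) sfun_one
      = Lop lam mu f p P sfun_one + Lw (mu - lam) f p (Q (F1, F2) sfun_one)"
    if quant: "is_quant Q" and equivariant: "osp_equivariant lam mu Q" for Q
  proof -
    have R: "Q (F1, F2) u = P u + smul (Q (F1, F2) sfun_one) u" if "sfun_ok u" for u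
      using is_quant_at_one[OF quant ok that] by (simp only: P_def)
    have "Q (Lsym lam mu f p (F1, F2)) sfun_one = Lop lam mu f p (Q (F1, F2)) sfun_one"
      using equivariant gen ok hom unfolding osp_equivariant_def by fastforce
    also have "\<dots> = Lop lam mu f p P sfun_one + Lw (mu - lam) f p (Q (F1, F2) sfun_one)"
      using f is_quant_at_one_linear(1)[OF quant ok ok] P_ok R by (rule Lop_add_mult_at_one)
    finally show ?thesis .
  qed
  show ?thesis
    unfolding F_eq Lsym_at_one[OF Q] Lsym_at_one[OF Q']
    using f(2) is_quant_at_one_linear(1)[OF Q(1) ok ok] is_quant_at_one_linear(1)[OF Q'(1) ok ok]
    by (simp add: Lw_diff)
qed

lemma quant_at_one_unique_hom:
  assumes "mu \<noteq> lam"
    and Q: "is_quant Q" "osp_equivariant lam mu Q"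
    and Q': "is_quant Q'" "osp_equivariant lam mu Q'"
    and F: "homogeneous_symbol F"
  shows "Q F sfun_one = Q' F sfun_one"
proof -
  define \<Delta> where "\<Delta> G = Q G sfun_one - Q' G sfun_one" for G
  define w where "w = mu - lam"
  have \<Delta>_scal: "\<Delta> (scal k G1, scal k G2) = scal k (\<Delta> (G1, G2))" if "sfun_ok G1" "sfun_ok G2" for k G1 G2
    using that is_quant_at_one_linear(4)[OF Q(1)] is_quant_at_one_linear(4)[OF Q'(1)]
    by (simp add: \<Delta>_def scal_diff_right)
  obtain F1 F2 where F_eq: "F = (F1, F2)" and ok: "sfun_ok F1" "sfun_ok F2"
    using F unfolding homogeneous_symbol_def by (cases F) auto
  have "\<Delta> (casimir (Lsym lam mu) F) = casimir (Lw w) (\<Delta> F)"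
  proof (rule casimir_intertwining[where S = homogeneous_symbol and V = "\<lambda>G. sfun_ok (fst G) \<and> sfun_ok (snd G)"])
    show "\<Delta> (Lsym lam mu f p G) = Lw w f p (\<Delta> G)" if "(f, p) \<in> osp_gens" "homogeneous_symbol G" for f p G
      using quant_at_one_intertwines[OF Q Q' that] by (simp add: \<Delta>_def w_def)
    show "\<Delta> (G - H) = \<Delta> G - \<Delta> H"
      if "sfun_ok (fst G) \<and> sfun_ok (snd G)" "sfun_ok (fst H) \<and> sfun_ok (snd H)" for G H
      using that is_quant_at_one_linear(3)[OF Q(1)] is_quant_at_one_linear(3)[OF Q'(1)]
      by (cases G; cases H) (simp add: \<Delta>_def)
  qed (use F homogeneous_symbol_Lsym in \<open>simp_all add: homogeneous_symbol_def\<close>)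
  moreover have "sfun_ok (\<Delta> F)"
    using ok is_quant_at_one_linear(1)[OF Q(1)] is_quant_at_one_linear(1)[OF Q'(1)] by (simp add: \<Delta>_def F_eq)
  ultimately have "scal (w - w\<^sup>2) (\<Delta> F) = scal (- w\<^sup>2) (\<Delta> F)"
    using ok by (simp add: F_eq casimir_Lsym casimir_Lw \<Delta>_scal w_def)
  moreover have "w - w\<^sup>2 \<noteq> - w\<^sup>2"
    using assms(1) by (simp add: w_def)
  ultimately have "\<Delta> F = 0"
    by (rule scal_cancel)
  then show ?thesis
    by (simp add: \<Delta>_def)
qed

lemma quant_unique:
  assumes "mu \<noteq> lam"
    and Q: "is_quant Q" "osp_equivariant lam mu Q"
    and Q': "is_quant Q'" "osp_equivariant lam mu Q'"
    and ok: "sfun_ok F1" "sfun_ok F2" "sfun_ok u"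
  shows "Q (F1, F2) u = Q' (F1, F2) u"
proof -
  have ok_parts: "sfun_ok (even_part F1)" "sfun_ok (even_part F2)" "sfun_ok (odd_part F1)" "sfun_ok (odd_part F2)"
    using ok by (simp_all add: sfun_ok_even_part sfun_ok_odd_part)
  have split: "R (F1, F2) sfun_one = R (even_part F1, even_part F2) sfun_one + R (odd_part F1, odd_part F2) sfun_one"
    if "is_quant R" for R
    using is_quant_at_one_linear(2)[OF that ok_parts] by (simp add: even_part_add_odd_part)
  have "homogeneous_symbol (even_part F1, even_part F2)" "homogeneous_symbol (odd_part F1, odd_part F2)"
    unfolding homogeneous_symbol_def using ok_parts hom_even_part hom_odd_part by auto
  then have "Q (F1, F2) sfun_one = Q' (F1, F2) sfun_one"
    unfolding split[OF Q(1)] split[OF Q'(1)] by (simp add: quant_at_one_unique_hom[OF assms(1) Q Q'])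
  then show ?thesis
    by (simp add: is_quant_at_one[OF Q(1) ok] is_quant_at_one[OF Q'(1) ok])
qed

theorem proposition4p1:
  fixes lam mu :: complex
  assumes "mu \<noteq> lam"
  shows "(\<exists>Q. is_quant Q \<and> osp_equivariant lam mu Q \<and>
            (\<forall>F1 F2 q u. sfun_ok F1 \<and> sfun_ok F2 \<and> hom q F1 \<and> hom q F2 \<and> sfun_ok u \<longrightarrow>
               Q (F1, F2) u = smul F1 (D1 u) + smul F2 (D2 u)
                 + smul (scal ((-1) ^ q * (lam / (lam - mu))) (D1 F1 + D2 F2)) u))
       \<and> (\<forall>Q Q'. is_quant Q \<and> osp_equivariant lam mu Q \<and> is_quant Q' \<and> osp_equivariant lam mu Q' \<longrightarrow>
            (\<forall>F1 F2 u. sfun_ok F1 \<and> sfun_ok F2 \<and> sfun_ok u \<longrightarrow> Q (F1, F2) u = Q' (F1, F2) u))"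
proof (intro conjI)
  define c where "c = lam / (lam - mu)"
  have "c * (lam - mu) = lam"
    using assms by (simp add: c_def)
  then have "osp_equivariant lam mu (quant c)"
    using quant_equivariant[of c "lam - mu"] by simp
  then show "\<exists>Q. is_quant Q \<and> osp_equivariant lam mu Q \<and>
            (\<forall>F1 F2 q u. sfun_ok F1 \<and> sfun_ok F2 \<and> hom q F1 \<and> hom q F2 \<and> sfun_ok u \<longrightarrow>
               Q (F1, F2) u = smul F1 (D1 u) + smul F2 (D2 u)
                 + smul (scal ((-1) ^ q * (lam / (lam - mu))) (D1 F1 + D2 F2)) u)"
    using is_quant_quant quant_hom unfolding c_def by blast
  show "\<forall>Q Q'. is_quant Q \<and> osp_equivariant lam mu Q \<and> is_quant Q' \<and> osp_equivariant lam mu Q' \<longrightarrow>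
            (\<forall>F1 F2 u. sfun_ok F1 \<and> sfun_ok F2 \<and> sfun_ok u \<longrightarrow> Q (F1, F2) u = Q' (F1, F2) u)"
    using quant_unique[OF assms] by blast
qed

end
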